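(* Let $0<c<1$ and $\alpha \in \mathbb{C}$. Then there exists a constant $B(c)$ (also allowed to depend on $\alpha$) such that for all $0<u<c$, \[ \left|(-\log{(1-e^{-u})})^{\alpha}-(-\log{u})^{\alpha}\right| \leq B(c)\, u^{1/2}(-\log{u})^{\operatorname{Re}(\alpha)-1/2}. \]
   Context: Powers of positive reals are defined by $x^{\alpha}=e^{\alpha\log x}$. *)

theory Defs
  imports "HOL-Analysis.Analysis"
begin

end

theory Submission imports Defs begin

text \<open>Put \<open>L = - ln u\<close> and \<open>M = - ln (1 - exp (- u))\<close>. Since
  \<open>u exp (- u) \<le> 1 - exp (- u) \<le> u\<close> we get \<open>L \<le> M \<le> L + u\<close>, hence
  \<open>0 \<le> ln (M / L) \<le> u / L\<close>, which stays bounded because \<open>L \<ge> - ln c\<close>. Factoring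
  \<open>M powr \<alpha> - L powr \<alpha> = L powr \<alpha> * (exp (\<alpha> * ln (M / L)) - 1)\<close> bounds the difference by a
  constant times \<open>L powr Re \<alpha> * u / L\<close>, and \<open>u / L = sqrt u * sqrt (u / L) / sqrt L\<close>
  with \<open>sqrt (u / L)\<close> bounded.\<close>

lemma norm_exp_minus_one_le:
  fixes z :: "'a::{banach,real_normed_field}"
  shows "norm (exp z - 1) \<le> norm z * exp (norm z)"
  using Taylor_exp_field[of z 0] by (simp add: mult.commute)

lemma norm_of_real_powr_diff_le:
  fixes \<alpha> :: complex and L M :: real
  assumes "0 < L" "0 < M"
  defines "d \<equiv> \<bar>ln M - ln L\<bar>"
  shows "cmod (of_real M powr \<alpha> - of_real L powr \<alpha>)
           \<le> L powr Re \<alpha> * (cmod \<alpha> * d) * exp (cmod \<alpha> * d)"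
proof -
  define w where "w = \<alpha> * of_real (ln M - ln L)"
  have "of_real M powr \<alpha> = of_real L powr \<alpha> * exp w"
    using assms by (simp add: powr_def Ln_of_real w_def exp_add[symmetric] algebra_simps)
  then have "of_real M powr \<alpha> - of_real L powr \<alpha> = of_real L powr \<alpha> * (exp w - 1)"
    by (simp add: algebra_simps)
  then have "cmod (of_real M powr \<alpha> - of_real L powr \<alpha>) = L powr Re \<alpha> * cmod (exp w - 1)"
    using assms by (simp add: norm_mult norm_powr_real_powr)
  also have "\<dots> \<le> L powr Re \<alpha> * (cmod w * exp (cmod w))"
    by (intro mult_left_mono norm_exp_minus_one_le) simp
  also have "cmod w = cmod \<alpha> * d"
    by (simp add: w_def d_def norm_mult del: of_real_diff)
  finally show ?thesis by simp
qed

lemma powr_mult_ratio_split: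
  fixes u L a :: real assumes "0 < u" "0 < L"
  shows "L powr a * (u / L) = u powr (1/2) * L powr (a - 1/2) * (u / L) powr (1/2)"
proof -
  have "L powr (a - 1/2) = L powr (a - 1) * L powr (1/2)"
    using assms by (simp flip: powr_add)
  moreover have "u powr (1/2) * (u / L) powr (1/2) = u / L powr (1/2)"
    using assms by (simp add: powr_divide powr_mult_base flip: powr_add)
  moreover have "L powr a * (u / L) = u * L powr (a - 1)"
    using assms by (simp add: powr_diff)
  ultimately show ?thesis
    using assms by (simp add: field_simps)
qed

lemma ln_one_minus_exp_neg_bounds:
  fixes u :: real assumes "0 < u"
  shows "ln u - u \<le> ln (1 - exp (- u))" "ln (1 - exp (- u)) \<le> ln u"
proof -
  have "u * exp (- u) \<le> 1 - exp (- u)"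
    using exp_ge_add_one_self[of u] by (simp add: exp_minus field_simps)
  moreover have "1 - exp (- u) \<le> u"
    using exp_ge_add_one_self[of "- u"] by simp
  moreover have "0 < u * exp (- u)" using assms by simp
  ultimately show "ln u - u \<le> ln (1 - exp (- u))" "ln (1 - exp (- u)) \<le> ln u"
    using assms by (simp_all add: ln_mult flip: ln_le_cancel_iff)
qed

lemma abs_diff_ln_neg_ln_le:
  fixes u :: real assumes "0 < u" "u < 1"
  shows "\<bar>ln (- ln (1 - exp (- u))) - ln (- ln u)\<bar> \<le> u / - ln u"
proof -
  define L M where "L = - ln u" and "M = - ln (1 - exp (- u))"
  have "0 < L" "L \<le> M" "M \<le> L + u"
    using assms ln_one_minus_exp_neg_bounds[of u] by (auto simp: L_def M_def)
  then have "\<bar>ln M - ln L\<bar> = ln (M / L)"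
    by (simp add: ln_div)
  also have "\<dots> \<le> M / L - 1"
    using \<open>0 < L\<close> \<open>L \<le> M\<close> by (intro ln_le_minus_one) simp
  also have "\<dots> = (M - L) / L"
    using \<open>0 < L\<close> by (simp add: field_simps)
  also have "\<dots> \<le> u / L"
    using \<open>0 < L\<close> \<open>M \<le> L + u\<close> by (intro divide_right_mono) auto
  finally show ?thesis by (simp add: L_def M_def)
qed

theorem proposition1:
  fixes c :: real and \<alpha> :: complex
  assumes "0 < c" and "c < 1"
  shows "\<exists>B::real. \<forall>u::real. 0 < u \<and> u < c \<longrightarrow>
    cmod (complex_of_real (- ln (1 - exp (- u))) powr \<alpha> - complex_of_real (- ln u) powr \<alpha>)
      \<le> B * u powr (1/2) * (- ln u) powr (Re \<alpha> - 1/2)"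
proof (intro exI allI impI)
  define L0 where "L0 = - ln c"
  fix u :: real assume u: "0 < u \<and> u < c"
  define L M where "L = - ln u" and "M = - ln (1 - exp (- u))"
  define d where "d = \<bar>ln M - ln L\<bar>"
  have "0 < L0" "L0 \<le> L" "0 < L" "L \<le> M"
    using assms u ln_one_minus_exp_neg_bounds[of u] by (auto simp: L0_def L_def M_def)
  have "u / L \<le> 1 / L0"
    using u assms \<open>0 < L0\<close> \<open>L0 \<le> L\<close> by (intro frac_le) auto
  moreover have "d \<le> u / L"
    using abs_diff_ln_neg_ln_le[of u] u assms by (simp add: d_def L_def M_def)
  ultimately have "cmod \<alpha> * d \<le> cmod \<alpha> / L0"
    by (simp add: mult_left_mono divide_inverse)
  have "cmod (of_real M powr \<alpha> - of_real L powr \<alpha>) \<le> L powr Re \<alpha> * (cmod \<alpha> * d) * exp (cmod \<alpha> * d)"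
    using \<open>0 < L\<close> \<open>L \<le> M\<close> unfolding d_def by (intro norm_of_real_powr_diff_le) auto
  also have "\<dots> \<le> L powr Re \<alpha> * (cmod \<alpha> * (u / L)) * exp (cmod \<alpha> / L0)"
    using u \<open>0 < L\<close> \<open>d \<le> u / L\<close> \<open>cmod \<alpha> * d \<le> cmod \<alpha> / L0\<close>
    by (intro mult_mono mult_left_mono) (auto simp: d_def)
  also have "\<dots> = cmod \<alpha> * exp (cmod \<alpha> / L0) * (u powr (1/2) * L powr (Re \<alpha> - 1/2) * (u / L) powr (1/2))"
    using u \<open>0 < L\<close> by (subst powr_mult_ratio_split[symmetric]) auto
  also have "\<dots> \<le> cmod \<alpha> * exp (cmod \<alpha> / L0) * (u powr (1/2) * L powr (Re \<alpha> - 1/2) * (1 / L0) powr (1/2))"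
    using u \<open>0 < L\<close> \<open>u / L \<le> 1 / L0\<close> by (intro mult_left_mono powr_mono2) auto
  finally show "cmod (of_real (- ln (1 - exp (- u))) powr \<alpha> - of_real (- ln u) powr \<alpha>)
      \<le> cmod \<alpha> * exp (cmod \<alpha> / L0) * (1 / L0) powr (1/2) * u powr (1/2) * (- ln u) powr (Re \<alpha> - 1/2)"
    by (simp add: L_def M_def ac_simps)
qed

end
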